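(* If $X$ is a crowded submaximal (Tychonoff) space, then $B_1(X)$ is a Baire space.
   Context: A space is crowded if it is non-empty and has no isolated points; it is submaximal if every dense subset is open. $B_1(X)$ is the set of all Baire-one real-valued functions on $X$ (pointwise limits of sequences of continuous real-valued functions on $X$) with the topology of pointwise convergence. A space is Baire if every countable intersection of open dense subsets is dense. All spaces are assumed Tychonoff. *)

theory Defs
  imports "HOL-Analysis.Analysis"
begin

definition tychonoff_space :: "'a topology \<Rightarrow> bool" where
  "tychonoff_space X \<longleftrightarrow> completely_regular_space X \<and> t1_space X"

definition crowded_space :: "'a topology \<Rightarrow> bool" where
  "crowded_space X \<longleftrightarrow> topspace X \<noteq> {} \<and> (\<forall>x \<in> topspace X. \<not> openin X {x})"

definition submaximal_space :: "'a topology \<Rightarrow> bool" where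
  "submaximal_space X \<longleftrightarrow>
     (\<forall>D. D \<subseteq> topspace X \<and> X closure_of D = topspace X \<longrightarrow> openin X D)"

definition baire_space :: "'a topology \<Rightarrow> bool" where
  "baire_space X \<longleftrightarrow>
     (\<forall>U :: nat \<Rightarrow> 'a set.
        (\<forall>n. openin X (U n) \<and> X closure_of (U n) = topspace X)
        \<longrightarrow> X closure_of (topspace X \<inter> (\<Inter>n. U n)) = topspace X)"

text \<open>Baire-one real functions on X, represented as extensional functions on
  topspace X (the points of the product space), that are pointwise limits of
  sequences of continuous real-valued functions on X.\<close>
definition baire_one :: "'a topology \<Rightarrow> ('a \<Rightarrow> real) set" where
  "baire_one X = {f. f \<in> extensional (topspace X) \<and>
     (\<exists>g :: nat \<Rightarrow> 'a \<Rightarrow> real. (\<forall>n. continuous_map X euclideanreal (g n)) \<and>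
        (\<forall>x \<in> topspace X. (\<lambda>n. g n x) \<longlonglongrightarrow> f x))}"

definition B1 :: "'a topology \<Rightarrow> ('a \<Rightarrow> real) topology" where
  "B1 X = subtopology (powertop_real (topspace X)) (baire_one X)"

end

theory Submission
  imports Defs
begin

text \<open>
  B_1(X) is a subspace of the product space R^X, whose basic open sets constrain finitely many
  coordinates. Inside a given open set choose basic open sets B_0 \<supseteq> B_1 \<supseteq> ..., with B_(n+1) inside
  the n-th dense open set and radii tending to 0. Their centres converge pointwise on the countable
  set S of coordinates involved, so B_1(X) is Baire as soon as every real function on a countable
  S \<subseteq> X agrees on S with some Baire-one function.

  In a submaximal Tychonoff space this interpolation is possible. The interior V of S is open and
  countable; sums of bump functions at finitely many of its points converge pointwise to any
  prescribed function on V that vanishes off V. Every subset of N = S - V has empty interior, so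
  it is closed by submaximality; hence N is closed and discrete, and a "first hit" selection among
  bumps at the points of N is a pointwise limit of continuous functions that interpolates on N.
\<close>

section \<open>Baire-one functions interpolating on countable sets\<close>

definition baire_one_function :: "'a topology \<Rightarrow> ('a \<Rightarrow> real) \<Rightarrow> bool" where
  "baire_one_function X f \<longleftrightarrow>
     (\<exists>g :: nat \<Rightarrow> 'a \<Rightarrow> real. (\<forall>n. continuous_map X euclideanreal (g n)) \<and>
        (\<forall>x \<in> topspace X. (\<lambda>n. g n x) \<longlonglongrightarrow> f x))"

lemma restrict_in_baire_one:
  assumes "baire_one_function X f"
  shows "restrict f (topspace X) \<in> baire_one X"
proof -
  obtain g where "\<And>n. continuous_map X euclideanreal (g n)"
      "\<And>x. x \<in> topspace X \<Longrightarrow> (\<lambda>n. g n x) \<longlonglongrightarrow> f x"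
    using assms unfolding baire_one_function_def by blast
  then show ?thesis unfolding baire_one_def by auto
qed

lemma baire_one_function_add:
  assumes "baire_one_function X f" "baire_one_function X g"
  shows "baire_one_function X (\<lambda>x. f x + g x)"
proof -
  obtain a where "\<And>n. continuous_map X euclideanreal (a n)"
      "\<And>x. x \<in> topspace X \<Longrightarrow> (\<lambda>n. a n x) \<longlonglongrightarrow> f x"
    using assms(1) unfolding baire_one_function_def by blast
  moreover obtain b where "\<And>n. continuous_map X euclideanreal (b n)"
      "\<And>x. x \<in> topspace X \<Longrightarrow> (\<lambda>n. b n x) \<longlonglongrightarrow> g x"
    using assms(2) unfolding baire_one_function_def by blast
  ultimately show ?thesis
    unfolding baire_one_function_def
    by (intro exI[of _ "\<lambda>n x. a n x + b n x"]) (auto intro: continuous_intros tendsto_add)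
qed

lemma baire_one_function_eventually_eq:
  assumes "\<And>n. continuous_map X euclideanreal (g n)"
    and "\<And>x. x \<in> topspace X \<Longrightarrow> eventually (\<lambda>n. g n x = f x) sequentially"
  shows "baire_one_function X f"
  unfolding baire_one_function_def using assms by (blast intro: tendsto_eventually)

lemma completely_regular_space_bump:
  assumes "completely_regular_space X" "closedin X C" "y \<in> topspace X - C"
  shows "\<exists>e. continuous_map X euclideanreal e \<and> e y = 1 \<and> (\<forall>z\<in>C. e z = 0)"
proof -
  obtain e where "continuous_map X euclideanreal e" "e y = 1" "e ` C \<subseteq> {0}"
    using assms unfolding completely_regular_space_gen_alt[of 1 0, simplified] by blast
  then show ?thesis by auto
qed

lemma completely_regular_t1_bump_avoiding_finite:
  assumes "completely_regular_space X" "t1_space X" "closedin X C" "finite F" "F \<subseteq> topspace X"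
    and "y \<in> topspace X - C"
  shows "\<exists>e. continuous_map X euclideanreal e \<and> e y = 1 \<and> (\<forall>z \<in> C \<union> (F - {y}). e z = 0)"
proof (rule completely_regular_space_bump[OF assms(1)])
  have "closedin X (F - {y})"
    using assms(2,4,5) by (meson Diff_subset finite_Diff order_trans t1_space_closedin_finite)
  then show "closedin X (C \<union> (F - {y}))"
    using assms(3) by blast
  show "y \<in> topspace X - (C \<union> (F - {y}))"
    using assms(6) by blast
qed

lemma sum_bumps_at_point:
  fixes a :: "'a \<Rightarrow> 'b::semiring_1" and e :: "'a \<Rightarrow> 'a \<Rightarrow> 'b"
  assumes "finite F" "x \<in> F" "e x x = 1" "\<And>y. y \<in> F - {x} \<Longrightarrow> e y x = 0"
  shows "(\<Sum>y\<in>F. a y * e y x) = a x"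
proof -
  have "(\<Sum>y\<in>F. a y * e y x) = (\<Sum>y\<in>F. if y = x then a x else 0)"
    using assms(3,4) by (intro sum.cong) auto
  then show ?thesis using assms(1,2) by simp
qed

lemma baire_one_function_countable_open_support:
  assumes "completely_regular_space X" "t1_space X" "openin X V" "countable V"
  shows "baire_one_function X (\<lambda>x. if x \<in> V then a x else 0)"
proof -
  have "V \<subseteq> topspace X" using assms(3) by (rule openin_subset)
  then have "\<exists>e. continuous_map X euclideanreal e \<and> e y = 1 \<and> (\<forall>z \<in> (topspace X - V) \<union> (F - {y}). e z = 0)"
    if "finite F" "F \<subseteq> V" "y \<in> V" for F y
    using that assms(3) by (intro completely_regular_t1_bump_avoiding_finite[OF assms(1,2)]) auto
  then obtain e where e: "\<And>F y. \<lbrakk>finite F; F \<subseteq> V; y \<in> V\<rbrakk> \<Longrightarrow>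
      continuous_map X euclideanreal (e F y) \<and> e F y y = 1 \<and>
      (\<forall>z \<in> (topspace X - V) \<union> (F - {y}). e F y z = 0)"
    by metis
  \<comment> \<open>Summing over the finite set Vn n rather than over indices avoids repetitions.\<close>
  define Vn where "Vn n = to_nat_on V -` {..<n} \<inter> V" for n
  have Vn: "finite (Vn n)" "Vn n \<subseteq> V" for n
    unfolding Vn_def using assms(4) by (auto intro: finite_vimage_IntI)
  have e_Vn: "continuous_map X euclideanreal (e (Vn n) y) \<and> e (Vn n) y y = 1 \<and>
      (\<forall>z \<in> (topspace X - V) \<union> (Vn n - {y}). e (Vn n) y z = 0)" if "y \<in> Vn n" for n y
    using e[OF Vn(1,2)] Vn(2) that by blast
  define g where "g n x = (\<Sum>y\<in>Vn n. a y * e (Vn n) y x)" for n x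
  show ?thesis
  proof (rule baire_one_function_eventually_eq)
    show "continuous_map X euclideanreal (g n)" for n
      unfolding g_def using e_Vn Vn(1) by (intro continuous_map_sum continuous_map_real_mult_left) auto
    fix x assume x: "x \<in> topspace X"
    show "\<forall>\<^sub>F n in sequentially. g n x = (if x \<in> V then a x else 0)"
    proof (cases "x \<in> V")
      case False
      then have "g n x = 0" for n
        unfolding g_def using e_Vn x by simp
      then show ?thesis using False by simp
    next
      case True
      have "g n x = a x" if "to_nat_on V x < n" for n
      proof -
        have "x \<in> Vn n" using True that unfolding Vn_def by simp
        then show ?thesis
          unfolding g_def using e_Vn by (intro sum_bumps_at_point Vn(1)) auto
      qed
      then have "\<forall>\<^sub>F n in sequentially. g n x = a x"
        by (rule eventually_mono[OF eventually_gt_at_top])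
      then show ?thesis using True by simp
    qed
  qed
qed

lemma first_hit_sum:
  fixes c :: "nat \<Rightarrow> real"
  assumes "\<And>j. j < m \<Longrightarrow> c j = 0" "c m = 1" "m < n"
  shows "(\<Sum>k<n. b k * c k * (\<Prod>j<k. 1 - c j)) = b m"
proof -
  have "b k * c k * (\<Prod>j<k. 1 - c j) = (if k = m then b m else 0)" for k
  proof (cases k m rule: linorder_cases)
    case greater
    then have "(\<Prod>j<k. 1 - c j) = 0" using assms(2) by (subst prod_zero_iff) auto
    then show ?thesis using greater by simp
  qed (use assms in auto)
  then show ?thesis using assms(3) by simp
qed

lemma baire_one_function_first_hit:
  fixes \<phi> :: "nat \<Rightarrow> 'a \<Rightarrow> real" and b :: "nat \<Rightarrow> real"
  assumes "\<And>k. continuous_map X euclideanreal (\<phi> k)"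
  shows "baire_one_function X (\<lambda>x. if \<exists>k. \<phi> k x > 0 then b (LEAST k. \<phi> k x > 0) else 0)"
proof -
  \<comment> \<open>As n grows, c k n x reaches the indicator of 0 < \<phi> k x, and the product switches off all
    indices after the first k with 0 < \<phi> k x.\<close>
  define c where "c k n x = min 1 (real n * max 0 (\<phi> k x))" for k n x
  define g where "g n x = (\<Sum>k<n. b k * c k n x * (\<Prod>j<k. 1 - c j n x))" for n x
  have c0: "\<phi> k x \<le> 0 \<Longrightarrow> c k n x = 0" for k n x
    unfolding c_def by simp
  show ?thesis
  proof (rule baire_one_function_eventually_eq)
    show "continuous_map X euclideanreal (g n)" for n
      unfolding g_def c_def using assms by (auto intro!: continuous_intros)
    fix x
    show "\<forall>\<^sub>F n in sequentially. g n x = (if \<exists>k. \<phi> k x > 0 then b (LEAST k. \<phi> k x > 0) else 0)"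
    proof (cases "\<exists>k. \<phi> k x > 0")
      case False
      then have "g n x = 0" for n unfolding g_def using c0 by (simp add: not_less)
      then show ?thesis using False by simp
    next
      case True
      define m where "m = (LEAST k. \<phi> k x > 0)"
      have m: "\<phi> m x > 0" and before_m: "\<And>j. j < m \<Longrightarrow> \<phi> j x \<le> 0"
        unfolding m_def using True by (auto intro: LeastI_ex dest: not_less_Least)
      obtain n0 where n0: "1 < real n0 * \<phi> m x"
        using reals_Archimedean3[OF m] by blast
      have "g n x = b m" if "max n0 m < n" for n
      proof -
        have "real n0 * \<phi> m x \<le> real n * \<phi> m x"
          using that m by (intro mult_right_mono) auto
        then have "1 \<le> real n * \<phi> m x" using n0 by linarith
        then have "c m n x = 1" using m unfolding c_def by simp
        then show ?thesis
          unfolding g_def using c0 before_m that by (intro first_hit_sum) auto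
      qed
      then have "\<forall>\<^sub>F n in sequentially. g n x = b m"
        by (rule eventually_mono[OF eventually_gt_at_top])
      then show ?thesis using True unfolding m_def by simp
    qed
  qed
qed

lemma baire_one_function_interpolating_on_closed_discrete:
  assumes "completely_regular_space X" "N \<subseteq> topspace X" "countable N"
    and "\<And>s. s \<in> N \<Longrightarrow> closedin X (N - {s})"
  shows "\<exists>h. baire_one_function X h \<and> (\<forall>x\<in>N. h x = a x)"
proof (cases "N = {}")
  case True
  have "baire_one_function X (\<lambda>x. 0)"
    by (rule baire_one_function_eventually_eq[where g = "\<lambda>n x. 0"]) auto
  then show ?thesis using True by blast
next
  case False
  have "\<exists>e. continuous_map X euclideanreal e \<and> e s = 1 \<and> (\<forall>z \<in> N - {s}. e z = 0)" if "s \<in> N" for s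
    using assms(2) that by (intro completely_regular_space_bump[OF assms(1) assms(4)]) auto
  then obtain e where e: "\<And>s. s \<in> N \<Longrightarrow>
      continuous_map X euclideanreal (e s) \<and> e s s = 1 \<and> (\<forall>z \<in> N - {s}. e s z = 0)"
    by metis
  define s where "s = from_nat_into N"
  have s_in: "s k \<in> N" for k
    unfolding s_def using False by (rule from_nat_into)
  have s_onto: "\<exists>k. s k = x" if "x \<in> N" for x
    unfolding s_def using assms(3) that by (metis from_nat_into_to_nat_on)
  have e_at: "e (s k) x > 0 \<longleftrightarrow> s k = x" if "x \<in> N" for k x
    using e[OF s_in] that by (cases "s k = x") auto
  define h where "h x = (if \<exists>k. e (s k) x > 0 then a (s (LEAST k. e (s k) x > 0)) else 0)" for x
  have "baire_one_function X h"
    unfolding h_def using e s_in by (intro baire_one_function_first_hit) blast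
  moreover have "h x = a x" if "x \<in> N" for x
  proof -
    have "\<exists>k. e (s k) x > 0" using s_onto[OF that] e_at[OF that] by blast
    then have "e (s (LEAST k. e (s k) x > 0)) x > 0" by (rule LeastI_ex)
    then show ?thesis unfolding h_def using e_at[OF that] \<open>\<exists>k. e (s k) x > 0\<close> by simp
  qed
  ultimately show ?thesis by blast
qed

lemma submaximal_space_closedin_interior_empty:
  assumes "submaximal_space X" "A \<subseteq> topspace X" "X interior_of A = {}"
  shows "closedin X A"
proof -
  have "X closure_of (topspace X - A) = topspace X"
    using assms(3) by (simp add: closure_of_complement)
  then have "openin X (topspace X - A)"
    using assms(1) unfolding submaximal_space_def by blast
  then show ?thesis using assms(2) closedin_def by blast
qed

lemma baire_one_interpolating_on_countable:
  assumes "tychonoff_space X" "submaximal_space X" "S \<subseteq> topspace X" "countable S"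
  shows "\<exists>f \<in> baire_one X. \<forall>x\<in>S. f x = L x"
proof -
  have cr: "completely_regular_space X" and t1: "t1_space X"
    using assms(1) unfolding tychonoff_space_def by auto
  define V where "V = X interior_of S"
  define N where "N = S - V"
  have "countable V"
    using interior_of_subset[of X S] assms(4) unfolding V_def by (rule countable_subset)
  have "closedin X (N - {s})" for s
  proof (rule submaximal_space_closedin_interior_empty[OF assms(2)])
    show "N - {s} \<subseteq> topspace X" using assms(3) unfolding N_def by blast
    have "X interior_of (N - {s}) \<subseteq> V \<inter> (N - {s})"
      using interior_of_mono[of "N - {s}" S X] interior_of_subset[of X "N - {s}"]
      unfolding N_def V_def by blast
    then show "X interior_of (N - {s}) = {}" unfolding N_def by blast
  qed
  moreover have "N \<subseteq> topspace X" "countable N"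
    using assms(3,4) unfolding N_def by auto
  ultimately obtain f2 where f2: "baire_one_function X f2" "\<forall>x\<in>N. f2 x = L x"
    using baire_one_function_interpolating_on_closed_discrete[OF cr] by metis
  have f1: "baire_one_function X (\<lambda>x. if x \<in> V then L x - f2 x else 0)"
    using baire_one_function_countable_open_support[OF cr t1 _ \<open>countable V\<close>]
    unfolding V_def by simp
  define f where "f = restrict (\<lambda>x. (if x \<in> V then L x - f2 x else 0) + f2 x) (topspace X)"
  have "f \<in> baire_one X"
    unfolding f_def using baire_one_function_add[OF f1 f2(1)] by (rule restrict_in_baire_one)
  moreover have "\<forall>x\<in>S. f x = L x"
    using f2(2) assms(3) unfolding f_def N_def by auto
  ultimately show ?thesis by blast
qed

section \<open>Baire subspaces of the product space R^T\<close>

definition pointwise_ball :: "('a \<Rightarrow> real) set \<Rightarrow> ('a \<Rightarrow> real) \<Rightarrow> 'a set \<Rightarrow> real \<Rightarrow> ('a \<Rightarrow> real) set"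
  where "pointwise_ball Y f F r = {h \<in> Y. \<forall>x\<in>F. \<bar>h x - f x\<bar> < r}"

lemma pointwise_ball_mono: "r \<le> r' \<Longrightarrow> F' \<subseteq> F \<Longrightarrow> pointwise_ball Y f F r \<subseteq> pointwise_ball Y f F' r'"
  unfolding pointwise_ball_def by fastforce

lemma topspace_powertop_real_subtopology:
  "Y \<subseteq> extensional T \<Longrightarrow> topspace (subtopology (powertop_real T) Y) = Y"
  by (auto simp: PiE_def)

lemma openin_pointwise_ball:
  assumes "Y \<subseteq> extensional T" "finite F" "F \<subseteq> T"
  shows "openin (subtopology (powertop_real T) Y) (pointwise_ball Y f F r)"
proof -
  let ?P = "powertop_real T"
  define W where "W x = {h \<in> topspace ?P. h x \<in> ball (f x) r}" for x
  have "openin ?P (W x)" if "x \<in> F" for x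
    unfolding W_def
    by (rule openin_continuous_map_preimage[OF continuous_map_product_projection])
       (use that assms in auto)
  then have "openin ?P ((\<Inter>x\<in>F. W x) \<inter> topspace ?P)"
    using assms(2) by blast
  moreover have "pointwise_ball Y f F r = ((\<Inter>x\<in>F. W x) \<inter> topspace ?P) \<inter> Y"
    unfolding pointwise_ball_def W_def using assms(1)
    by (auto simp: PiE_def dist_real_def abs_minus_commute)
  ultimately show ?thesis unfolding openin_subtopology by blast
qed

lemma pointwise_ball_in_openin:
  assumes "Y \<subseteq> extensional T" "openin (subtopology (powertop_real T) Y) W" "f \<in> W"
  obtains F r where "finite F" "F \<subseteq> T" "r > 0" "pointwise_ball Y f F r \<subseteq> W"
proof -
  obtain W' where W': "openin (powertop_real T) W'" "W = W' \<inter> Y"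
    using assms(2) unfolding openin_subtopology by blast
  then obtain U where U: "finite {i \<in> T. U i \<noteq> UNIV}" "\<And>i. i \<in> T \<Longrightarrow> open (U i)"
      "f \<in> Pi\<^sub>E T U" "Pi\<^sub>E T U \<subseteq> W'"
    using assms(3) unfolding openin_product_topology_alt by auto
  define F where "F = {i \<in> T. U i \<noteq> UNIV}"
  have "\<exists>e>0. ball (f i) e \<subseteq> U i" if "i \<in> F" for i
    using U(2,3) that unfolding F_def by (auto simp: open_contains_ball PiE_iff)
  then obtain \<epsilon> where \<epsilon>: "\<And>i. i \<in> F \<Longrightarrow> \<epsilon> i > 0 \<and> ball (f i) (\<epsilon> i) \<subseteq> U i"
    by metis
  define r where "r = Min (insert 1 (\<epsilon> ` F))"
  have "finite F" using U(1) unfolding F_def .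
  then have "r > 0" and r_le: "\<And>i. i \<in> F \<Longrightarrow> r \<le> \<epsilon> i"
    unfolding r_def using \<epsilon> by auto
  have "h \<in> W" if h: "h \<in> pointwise_ball Y f F r" for h
  proof -
    have "h i \<in> U i" if "i \<in> T" for i
    proof (cases "i \<in> F")
      case True
      then have "h i \<in> ball (f i) (\<epsilon> i)"
        using h r_le[OF True] unfolding pointwise_ball_def by (auto simp: dist_real_def abs_minus_commute)
      then show ?thesis using \<epsilon>[OF True] by auto
    qed (use that F_def in auto)
    moreover have "h \<in> extensional T"
      using h assms(1) unfolding pointwise_ball_def by blast
    ultimately have "h \<in> Pi\<^sub>E T U" by (simp add: PiE_iff)
    then show ?thesis using U(4) W'(2) h unfolding pointwise_ball_def by auto
  qed
  then have "pointwise_ball Y f F r \<subseteq> W" by blast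
  moreover have "F \<subseteq> T" unfolding F_def by blast
  ultimately show ?thesis using that \<open>finite F\<close> \<open>r > 0\<close> by blast
qed

lemma nested_pointwise_limit:
  fixes f :: "nat \<Rightarrow> 'a \<Rightarrow> real"
  assumes F_mono: "\<And>n. F n \<subseteq> F (Suc n)"
    and close: "\<And>n k x. n \<le> k \<Longrightarrow> x \<in> F n \<Longrightarrow> \<bar>f k x - f n x\<bar> < r n"
    and r: "r \<longlonglongrightarrow> 0"
  obtains L where "\<And>n x. x \<in> F n \<Longrightarrow> \<bar>L x - f n x\<bar> \<le> r n"
proof
  have F_le: "F n \<subseteq> F k" if "n \<le> k" for n k
    using lift_Suc_mono_le[of F, OF F_mono that] .
  have "convergent (\<lambda>k. f k x)" if "x \<in> F n0" for n0 x
  proof (rule Cauchy_convergent, rule metric_CauchyI)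
    fix e :: real assume "e > 0"
    then obtain M0 where M0: "\<And>n. n \<ge> M0 \<Longrightarrow> \<bar>r n\<bar> < e / 2"
      using r unfolding LIMSEQ_def dist_real_def by (metis diff_zero half_gt_zero)
    define M where "M = max n0 M0"
    have "x \<in> F M" using F_le[of n0 M] that unfolding M_def by auto
    have "dist (f m x) (f k x) < e" if "m \<ge> M" "k \<ge> M" for m k
    proof -
      have "\<bar>f m x - f M x\<bar> < r M" "\<bar>f k x - f M x\<bar> < r M"
        using close \<open>x \<in> F M\<close> that by auto
      moreover have "\<bar>r M\<bar> < e / 2" using M0 unfolding M_def by simp
      ultimately show ?thesis unfolding dist_real_def by linarith
    qed
    then show "\<exists>M. \<forall>m\<ge>M. \<forall>k\<ge>M. dist (f m x) (f k x) < e" by blast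
  qed
  then have lim: "(\<lambda>k. f k x) \<longlonglongrightarrow> lim (\<lambda>k. f k x)" if "x \<in> F n" for n x
    using that by (simp add: convergent_LIMSEQ_iff)
  show "\<bar>lim (\<lambda>k. f k x) - f n x\<bar> \<le> r n" if "x \<in> F n" for n x
  proof (rule tendsto_upperbound)
    show "(\<lambda>k. \<bar>f k x - f n x\<bar>) \<longlonglongrightarrow> \<bar>lim (\<lambda>k. f k x) - f n x\<bar>"
      using lim[OF that] by (intro tendsto_intros)
    show "\<forall>\<^sub>F k in sequentially. \<bar>f k x - f n x\<bar> \<le> r n"
      using close[OF _ that] by (intro eventually_mono[OF eventually_ge_at_top[of n]]) (simp add: less_imp_le)
  qed simp
qed

lemma pointwise_ball_shrink_into_dense_open:
  assumes Y: "Y \<subseteq> extensional T"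
    and U: "openin (subtopology (powertop_real T) Y) U" "subtopology (powertop_real T) Y closure_of U = Y"
    and "f \<in> Y" "finite F" "F \<subseteq> T" "r > 0" "\<epsilon> > 0"
  obtains f' G r' where "f' \<in> Y" "finite G" "F \<subseteq> G" "G \<subseteq> T" "0 < r'" "r' \<le> \<epsilon>"
    "pointwise_ball Y f' G (2 * r') \<subseteq> U \<inter> pointwise_ball Y f F r"
proof -
  let ?Y = "subtopology (powertop_real T) Y"
  have ball_open: "openin ?Y (pointwise_ball Y f F r)"
    using Y assms(5,6) by (rule openin_pointwise_ball)
  moreover have "f \<in> pointwise_ball Y f F r"
    using assms(4,7) unfolding pointwise_ball_def by simp
  moreover have "?Y closure_of U = topspace ?Y"
    using U(2) topspace_powertop_real_subtopology[OF Y] by simp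
  ultimately obtain f' where f': "f' \<in> U \<inter> pointwise_ball Y f F r"
    unfolding dense_intersects_open by blast
  obtain G \<rho> where G: "finite G" "G \<subseteq> T" "\<rho> > 0" "pointwise_ball Y f' G \<rho> \<subseteq> U \<inter> pointwise_ball Y f F r"
    using pointwise_ball_in_openin[OF Y openin_Int[OF U(1) ball_open] f'] by blast
  define r' where "r' = min (\<rho> / 2) \<epsilon>"
  show thesis
  proof (rule that)
    show "f' \<in> Y" using f' unfolding pointwise_ball_def by blast
    show "0 < r'" "r' \<le> \<epsilon>" unfolding r'_def using G(3) assms(8) by auto
    have "pointwise_ball Y f' (F \<union> G) (2 * r') \<subseteq> pointwise_ball Y f' G \<rho>"
      unfolding r'_def by (rule pointwise_ball_mono) auto
    then show "pointwise_ball Y f' (F \<union> G) (2 * r') \<subseteq> U \<inter> pointwise_ball Y f F r"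
      using G(4) by blast
  qed (use G assms(5,6) in auto)
qed

lemma nested_pointwise_balls:
  assumes Y: "Y \<subseteq> extensional T"
    and U_open: "\<And>n. openin (subtopology (powertop_real T) Y) (U n)"
    and U_dense: "\<And>n. subtopology (powertop_real T) Y closure_of (U n) = Y"
    and W: "openin (subtopology (powertop_real T) Y) W" "W \<noteq> {}"
  obtains f F r where "\<And>n. f n \<in> Y" "\<And>n. finite (F n)" "\<And>n. F n \<subseteq> T" "\<And>n. 0 < r n"
    "r \<longlonglongrightarrow> 0" "\<And>n. F n \<subseteq> F (Suc n)" "pointwise_ball Y (f 0) (F 0) (2 * r 0) \<subseteq> W"
    "\<And>n. pointwise_ball Y (f (Suc n)) (F (Suc n)) (2 * r (Suc n))
           \<subseteq> U n \<inter> pointwise_ball Y (f n) (F n) (r n)"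
proof -
  obtain f0 where "f0 \<in> W" using W(2) by blast
  then obtain F0 r0 where F0: "finite F0" "F0 \<subseteq> T" "r0 > 0" "pointwise_ball Y f0 F0 r0 \<subseteq> W"
    using pointwise_ball_in_openin[OF Y W(1)] by blast
  have "f0 \<in> Y"
    using openin_subset[OF W(1)] \<open>f0 \<in> W\<close> topspace_powertop_real_subtopology[OF Y] by blast
  \<comment> \<open>Inclusion in W is inherited along the sequence since the balls are nested.\<close>
  define P where "P n = (\<lambda>(f, F, r). f \<in> Y \<and> finite F \<and> F \<subseteq> T \<and> 0 < r \<and> r \<le> r0 / real (Suc n)
      \<and> pointwise_ball Y f F (2 * r) \<subseteq> W)" for n
  define Q where "Q n = (\<lambda>(f, F, r) (f', F', r'). F \<subseteq> F'
      \<and> pointwise_ball Y f' F' (2 * r') \<subseteq> U n \<inter> pointwise_ball Y f F r)" for n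
  have "P 0 (f0, F0, r0 / 2)"
    unfolding P_def using F0 \<open>f0 \<in> Y\<close> by auto
  moreover have "\<exists>st'. P (Suc n) st' \<and> Q n st st'" if "P n st" for n st
  proof -
    obtain f F r where st: "st = (f, F, r)" by (cases st)
    have f: "f \<in> Y" "finite F" "F \<subseteq> T" "0 < r" "pointwise_ball Y f F (2 * r) \<subseteq> W"
      using that unfolding P_def st by auto
    have "r0 / real (Suc (Suc n)) > 0" using F0(3) by simp
    then obtain f' G r' where f': "f' \<in> Y" "finite G" "F \<subseteq> G" "G \<subseteq> T" "0 < r'"
        "r' \<le> r0 / real (Suc (Suc n))" "pointwise_ball Y f' G (2 * r') \<subseteq> U n \<inter> pointwise_ball Y f F r"
      by (rule pointwise_ball_shrink_into_dense_open[OF Y U_open[of n] U_dense[of n] f(1-4)])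
    have "pointwise_ball Y f F r \<subseteq> pointwise_ball Y f F (2 * r)"
      using f(4) by (intro pointwise_ball_mono) auto
    then have "P (Suc n) (f', G, r') \<and> Q n st (f', G, r')"
      unfolding P_def Q_def st using f f' by auto
    then show ?thesis by blast
  qed
  ultimately obtain st where st: "\<And>n. P n (st n) \<and> Q n (st n) (st (Suc n))"
    using dependent_nat_choice[of P Q] by blast
  define f F r where "f n = fst (st n)" and "F n = fst (snd (st n))" and "r n = snd (snd (st n))" for n
  have P: "f n \<in> Y \<and> finite (F n) \<and> F n \<subseteq> T \<and> 0 < r n \<and> r n \<le> r0 / real (Suc n)
      \<and> pointwise_ball Y (f n) (F n) (2 * r n) \<subseteq> W" for n
    using st[of n] unfolding P_def f_def F_def r_def by (simp add: case_prod_beta)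
  have Q: "F n \<subseteq> F (Suc n) \<and> pointwise_ball Y (f (Suc n)) (F (Suc n)) (2 * r (Suc n))
      \<subseteq> U n \<inter> pointwise_ball Y (f n) (F n) (r n)" for n
    using st[of n] unfolding Q_def f_def F_def r_def by (simp add: case_prod_beta)
  have "r \<longlonglongrightarrow> 0"
  proof (rule real_tendsto_sandwich[of "\<lambda>n. 0" _ _ "\<lambda>n. r0 / real (Suc n)"])
    show "(\<lambda>n. r0 / real (Suc n)) \<longlonglongrightarrow> 0"
      using LIMSEQ_Suc[OF lim_const_over_n[of r0]] by simp
  qed (use P in \<open>auto intro: always_eventually less_imp_le\<close>)
  then show thesis
    using that[of f F r] P Q by blast
qed

lemma nested_pointwise_balls_common_point:
  assumes interpolate: "\<And>S (L :: 'a \<Rightarrow> real). S \<subseteq> T \<Longrightarrow> countable S \<Longrightarrow> \<exists>f\<in>Y. \<forall>x\<in>S. f x = L x"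
    and f: "\<And>n. f n \<in> Y" "\<And>n. finite (F n)" "\<And>n. F n \<subseteq> T" "\<And>n. 0 < r n"
      "r \<longlonglongrightarrow> 0" "\<And>n. F n \<subseteq> F (Suc n)"
    and nested: "\<And>n. pointwise_ball Y (f (Suc n)) (F (Suc n)) (2 * r (Suc n))
      \<subseteq> pointwise_ball Y (f n) (F n) (r n)"
  obtains h where "\<And>n. h \<in> pointwise_ball Y (f n) (F n) (2 * r n)"
proof -
  define B where "B n = pointwise_ball Y (f n) (F n) (2 * r n)" for n
  have "pointwise_ball Y (f n) (F n) (r n) \<subseteq> B n" for n
    unfolding B_def using f(4) by (intro pointwise_ball_mono) auto
  then have "B (Suc n) \<subseteq> B n" for n
    using nested[of n] unfolding B_def by blast
  then have B_antimono: "B k \<subseteq> B n" if "n \<le> k" for n k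
    using that by (simp add: decseq_Suc_iff decseqD)
  have centre: "f k \<in> B k" for k
    unfolding B_def pointwise_ball_def using f(1,4) by simp
  have close: "\<bar>f k x - f n x\<bar> < r n" if "n \<le> k" "x \<in> F n" for n k x
  proof (cases "n = k")
    case False
    then have "f k \<in> B (Suc n)"
      using B_antimono[of "Suc n" k] centre[of k] that(1) by auto
    then have "f k \<in> pointwise_ball Y (f n) (F n) (r n)"
      using nested[of n] unfolding B_def by blast
    then show ?thesis using that(2) unfolding pointwise_ball_def by blast
  qed (use f(4) in simp)
  obtain L where L: "\<And>n x. x \<in> F n \<Longrightarrow> \<bar>L x - f n x\<bar> \<le> r n"
    using nested_pointwise_limit[of F f r, OF f(6) close f(5)] by blast
  have "countable (\<Union>n. F n)" using f(2) by (simp add: countable_finite)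
  then obtain h where h: "h \<in> Y" "\<And>x. x \<in> (\<Union>n. F n) \<Longrightarrow> h x = L x"
    using interpolate[of "\<Union>n. F n" L] f(3) by blast
  have "h \<in> B n" for n
  proof -
    have "\<bar>h x - f n x\<bar> < 2 * r n" if "x \<in> F n" for x
    proof -
      have "h x = L x" using h(2) that by blast
      then show ?thesis using L[OF that] f(4)[of n] by simp
    qed
    then show ?thesis unfolding B_def pointwise_ball_def using h(1) by blast
  qed
  then show thesis using that unfolding B_def by blast
qed

lemma baire_space_powertop_real_subtopology:
  assumes Y: "Y \<subseteq> extensional T"
    and interpolate: "\<And>S (L :: 'a \<Rightarrow> real). S \<subseteq> T \<Longrightarrow> countable S \<Longrightarrow> \<exists>f\<in>Y. \<forall>x\<in>S. f x = L x"
  shows "baire_space (subtopology (powertop_real T) Y)"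
  unfolding baire_space_def
proof (intro allI impI)
  let ?Y = "subtopology (powertop_real T) Y"
  fix U :: "nat \<Rightarrow> ('a \<Rightarrow> real) set"
  assume "\<forall>n. openin ?Y (U n) \<and> ?Y closure_of U n = topspace ?Y"
  then have U_open: "\<And>n. openin ?Y (U n)" and U_dense: "\<And>n. ?Y closure_of U n = Y"
    using topspace_powertop_real_subtopology[OF Y] by auto
  have "(Y \<inter> (\<Inter>n. U n)) \<inter> W \<noteq> {}" if W: "openin ?Y W" "W \<noteq> {}" for W
  proof -
    obtain f F r where f: "\<And>n. f n \<in> Y" "\<And>n. finite (F n)" "\<And>n. F n \<subseteq> T" "\<And>n. 0 < r n"
      "r \<longlonglongrightarrow> 0" "\<And>n. F n \<subseteq> F (Suc n)" "pointwise_ball Y (f 0) (F 0) (2 * r 0) \<subseteq> W"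
      "\<And>n. pointwise_ball Y (f (Suc n)) (F (Suc n)) (2 * r (Suc n))
             \<subseteq> U n \<inter> pointwise_ball Y (f n) (F n) (r n)"
      using nested_pointwise_balls[of Y T U W, OF Y U_open U_dense W] by blast
    moreover have "pointwise_ball Y (f (Suc n)) (F (Suc n)) (2 * r (Suc n))
        \<subseteq> pointwise_ball Y (f n) (F n) (r n)" for n
      using f(8) by blast
    ultimately obtain h where h: "\<And>n. h \<in> pointwise_ball Y (f n) (F n) (2 * r n)"
      using nested_pointwise_balls_common_point[OF interpolate] by blast
    then have "h \<in> Y" "h \<in> W" "h \<in> U n" for n
      using f(7) f(8)[of n] h[of "Suc n"] unfolding pointwise_ball_def by blast+
    then show ?thesis by blast
  qed
  then show "?Y closure_of (topspace ?Y \<inter> (\<Inter>n. U n)) = topspace ?Y"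
    unfolding dense_intersects_open by (simp only: topspace_powertop_real_subtopology[OF Y]) blast
qed

theorem mainTheorem5:
  fixes X :: "'a topology"
  assumes "tychonoff_space X" and "crowded_space X" and "submaximal_space X"
  shows "baire_space (B1 X)"
proof -
  have "baire_one X \<subseteq> extensional (topspace X)"
    unfolding baire_one_def by blast
  moreover have "\<exists>f \<in> baire_one X. \<forall>x\<in>S. f x = L x"
    if "S \<subseteq> topspace X" "countable S" for S and L :: "'a \<Rightarrow> real"
    using baire_one_interpolating_on_countable[OF assms(1,3) that] .
  ultimately show ?thesis
    unfolding B1_def by (rule baire_space_powertop_real_subtopology)
qed

end
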